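(* Let $I$ be a small directed category and let $A_I$ be the poset constructed from $I$ as described in the context. Then $A_I$ is a cofinite directed poset of infinite height.
   Context: Posets are categories with a unique morphism $u\to v$ iff $u\geq v$. A poset is cofinite if each $\{z\mid z\le x\}$ is finite; directed if nonempty with common upper bounds for pairs; of infinite height if each element has a strictly larger one. A subset $R$ of a poset $T$ is a section if $x\in R$, $y<x$ imply $y\in R$. For a category $\mathcal{R}$, $\mathcal{R}^{\lhd}$ is $\mathcal{R}$ with a new initial object $\infty$ adjoined. A category $I$ is directed if nonempty, any two objects admit an object mapping to both, and any parallel pair $f,g:s\to t$ is equalized by some $h:u\to s$. Construction: set $A_I^{-1}=\emptyset$ and $p^{-1}_I$ the empty functor. Given a poset $A_I^n$ and a functor $p_I^n:A_I^n\to I$, let $B_I^{n+1}$ be the set of pairs $(R,p)$ with $R$ a finite section of $A_I^n$ and $p:R^{\lhd}\to I$ a functor with $p|_R=p_I^n|_R$. Set $A_I^{n+1}=A_I^n\sqcup B_I^{n+1}$, with the order of $A_I^n$ extended by $c<(R,p)$ iff $c\in R$ (for $c\in A_I^n$), and $p_I^{n+1}$ extending $p_I^n$ with $p_I^{n+1}(R,p)=p(\infty)$ (on morphisms $(R,p)\to c$ it is $p(\infty\to c)$). Let $A_I=\bigcup_n A_I^n$ and $p_I:A_I\to I$ the union of the $p_I^n$. *)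

theory Defs
  imports Main "HOL-Library.FSet"
begin

definition category ::
  "'o set \<Rightarrow> ('o \<Rightarrow> 'o \<Rightarrow> 'm set) \<Rightarrow> ('m \<Rightarrow> 'm \<Rightarrow> 'm) \<Rightarrow> ('o \<Rightarrow> 'm) \<Rightarrow> bool" where
  "category Ob Hom cmp ident \<longleftrightarrow>
     (\<forall>a\<in>Ob. ident a \<in> Hom a a) \<and>
     (\<forall>a\<in>Ob. \<forall>b\<in>Ob. \<forall>c\<in>Ob. \<forall>f\<in>Hom a b. \<forall>g\<in>Hom b c. cmp g f \<in> Hom a c) \<and>
     (\<forall>a\<in>Ob. \<forall>b\<in>Ob. \<forall>f\<in>Hom a b. cmp (ident b) f = f \<and> cmp f (ident a) = f) \<and>
     (\<forall>a\<in>Ob. \<forall>b\<in>Ob. \<forall>c\<in>Ob. \<forall>d\<in>Ob. \<forall>f\<in>Hom a b. \<forall>g\<in>Hom b c. \<forall>h\<in>Hom c d.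
        cmp h (cmp g f) = cmp (cmp h g) f) \<and>
     (\<forall>a b. (a \<notin> Ob \<or> b \<notin> Ob) \<longrightarrow> Hom a b = {})"

definition directed_category ::
  "'o set \<Rightarrow> ('o \<Rightarrow> 'o \<Rightarrow> 'm set) \<Rightarrow> ('m \<Rightarrow> 'm \<Rightarrow> 'm) \<Rightarrow> bool" where
  "directed_category Ob Hom cmp \<longleftrightarrow>
     Ob \<noteq> {} \<and>
     (\<forall>s\<in>Ob. \<forall>t\<in>Ob. \<exists>u\<in>Ob. Hom u s \<noteq> {} \<and> Hom u t \<noteq> {}) \<and>
     (\<forall>s\<in>Ob. \<forall>t\<in>Ob. \<forall>f\<in>Hom s t. \<forall>g\<in>Hom s t.
        \<exists>u\<in>Ob. \<exists>h\<in>Hom u s. cmp f h = cmp g h)"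

text \<open>An element (R,p) of B^{k+1} is represented as ANode k x S, where k records the
  stage (making the union A^k \<sqcup> B^{k+1} disjoint), x = p(\<infinity>), and S is the finite
  graph of the cone c \<mapsto> p(\<infinity> \<rightarrow> c) on R; R = fst ` S. Since p|_R = p^k|_R is forced,
  this data determines the functor p.\<close>

datatype ('o, 'm) anode = ANode nat 'o "(('o, 'm) anode \<times> 'm) fset"

definition node_obj :: "('o, 'm) anode \<Rightarrow> 'o" where
  "node_obj y = (case y of ANode _ x _ \<Rightarrow> x)"

definition node_cone :: "('o, 'm) anode \<Rightarrow> (('o, 'm) anode \<times> 'm) set" where
  "node_cone y = (case y of ANode _ _ S \<Rightarrow> fset S)"

definition anode_less :: "('o, 'm) anode \<Rightarrow> ('o, 'm) anode \<Rightarrow> bool" where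
  "anode_less c y \<longleftrightarrow> c \<in> fst ` node_cone y"

definition anode_le :: "('o, 'm) anode \<Rightarrow> ('o, 'm) anode \<Rightarrow> bool" where
  "anode_le c y \<longleftrightarrow> c = y \<or> anode_less c y"

text \<open>p_I on the morphism y \<rightarrow> c (for c < y).\<close>
definition pmor :: "('o, 'm) anode \<Rightarrow> ('o, 'm) anode \<Rightarrow> 'm" where
  "pmor y c = (THE m. (c, m) \<in> node_cone y)"

definition is_section :: "('o, 'm) anode set \<Rightarrow> ('o, 'm) anode set \<Rightarrow> bool" where
  "is_section P R \<longleftrightarrow> R \<subseteq> P \<and> (\<forall>x\<in>R. \<forall>y\<in>P. anode_less y x \<longrightarrow> y \<in> R)"

definition Bnew ::
  "'o set \<Rightarrow> ('o \<Rightarrow> 'o \<Rightarrow> 'm set) \<Rightarrow> ('m \<Rightarrow> 'm \<Rightarrow> 'm) \<Rightarrow> ('o, 'm) anode set \<Rightarrow> nat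
     \<Rightarrow> ('o, 'm) anode set" where
  "Bnew Ob Hom cmp P k =
     {ANode k x S | x S.
        is_section P (fst ` fset S) \<and>
        (\<forall>c m m'. (c, m) \<in> fset S \<longrightarrow> (c, m') \<in> fset S \<longrightarrow> m = m') \<and>
        x \<in> Ob \<and>
        (\<forall>(c, m) \<in> fset S. m \<in> Hom x (node_obj c)) \<and>
        (\<forall>(c, m) \<in> fset S. \<forall>(d, m') \<in> fset S. anode_less d c \<longrightarrow> cmp (pmor c d) m = m')}"

text \<open>Alev 0 = A^{-1} = {}, Alev (Suc k) = A^k.\<close>
primrec Alev ::
  "'o set \<Rightarrow> ('o \<Rightarrow> 'o \<Rightarrow> 'm set) \<Rightarrow> ('m \<Rightarrow> 'm \<Rightarrow> 'm) \<Rightarrow> nat \<Rightarrow> ('o, 'm) anode set" where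
  "Alev Ob Hom cmp 0 = {}"
| "Alev Ob Hom cmp (Suc k) = Alev Ob Hom cmp k \<union> Bnew Ob Hom cmp (Alev Ob Hom cmp k) k"

definition A_I ::
  "'o set \<Rightarrow> ('o \<Rightarrow> 'o \<Rightarrow> 'm set) \<Rightarrow> ('m \<Rightarrow> 'm \<Rightarrow> 'm) \<Rightarrow> ('o, 'm) anode set" where
  "A_I Ob Hom cmp = (\<Union>k. Alev Ob Hom cmp k)"

definition is_poset :: "'a set \<Rightarrow> ('a \<Rightarrow> 'a \<Rightarrow> bool) \<Rightarrow> bool" where
  "is_poset A le \<longleftrightarrow> (\<forall>x\<in>A. le x x) \<and>
     (\<forall>x\<in>A. \<forall>y\<in>A. le x y \<longrightarrow> le y x \<longrightarrow> x = y) \<and>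
     (\<forall>x\<in>A. \<forall>y\<in>A. \<forall>z\<in>A. le x y \<longrightarrow> le y z \<longrightarrow> le x z)"

definition poset_cofinite :: "'a set \<Rightarrow> ('a \<Rightarrow> 'a \<Rightarrow> bool) \<Rightarrow> bool" where
  "poset_cofinite A le \<longleftrightarrow> (\<forall>x\<in>A. finite {z\<in>A. le z x})"

definition poset_directed :: "'a set \<Rightarrow> ('a \<Rightarrow> 'a \<Rightarrow> bool) \<Rightarrow> bool" where
  "poset_directed A le \<longleftrightarrow> A \<noteq> {} \<and> (\<forall>x\<in>A. \<forall>y\<in>A. \<exists>z\<in>A. le x z \<and> le y z)"

definition infinite_height :: "'a set \<Rightarrow> ('a \<Rightarrow> 'a \<Rightarrow> bool) \<Rightarrow> bool" where
  "infinite_height A le \<longleftrightarrow> (\<forall>x\<in>A. \<exists>y\<in>A. le x y \<and> x \<noteq> y)"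

end

theory Submission
  imports Defs
begin

text \<open>Every finite subset of \<open>A_I\<close> has a strict upper bound: this gives directedness
  (two elements), infinite height (one element) and non-emptiness (no element) at once.
  To bound a finite set \<open>F\<close>, take its down-closure \<open>R\<close>, a finite section, and build a cone
  over it: directedness of \<open>I\<close> gives an object mapping to every \<open>p_I(x)\<close>, \<open>x \<in> F\<close>, and then
  a single morphism equalizing the finitely many pairs of composites to the \<open>p_I(c)\<close>,
  \<open>c \<in> R\<close>, that must agree.
  Antisymmetry holds because an element lies below another only if it occurs inside it as a
  subterm, and cofiniteness because the elements below \<open>(R, p)\<close> are those of the finite set
  \<open>R\<close>.\<close>

lemma anode_less_size: "anode_less c y \<Longrightarrow> size c < size y"
proof -
  assume "anode_less c y"
  then obtain k x S m where y: "y = ANode k x S" and cm: "(c, m) |\<in>| S"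
    unfolding anode_less_def node_cone_def by (cases y) auto
  let ?g = "\<lambda>p. Suc (size_prod snd (\<lambda>_. 0) p)"
  have "size c < ?g ((c, size c), m)" by simp
  also have "\<dots> \<le> (\<Sum>p\<in>map_prod (\<lambda>a. (a, size a)) id ` fset S. ?g p)"
    by (rule member_le_sum) (use cm in force)+
  finally show ?thesis using y by (simp add: id_def)
qed

lemma anode_less_irrefl: "\<not> anode_less x x"
  using anode_less_size by blast

lemma anode_less_asym: "anode_less x y \<Longrightarrow> \<not> anode_less y x"
  by (meson anode_less_size less_asym)

section \<open>The levels \<open>A^k\<close>\<close>

context
  fixes Ob :: "'o set" and Hom :: "'o \<Rightarrow> 'o \<Rightarrow> 'm set" and cmp :: "'m \<Rightarrow> 'm \<Rightarrow> 'm"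
begin

lemma Alev_mono: "k \<le> l \<Longrightarrow> Alev Ob Hom cmp k \<subseteq> Alev Ob Hom cmp l"
  by (induction l) (auto simp: le_Suc_eq)

lemma Alev_imp_Bnew:
  "x \<in> Alev Ob Hom cmp k \<Longrightarrow> \<exists>j<k. x \<in> Bnew Ob Hom cmp (Alev Ob Hom cmp j) j"
  by (induction k) (auto simp: less_Suc_eq)

lemma finite_subset_Alev:
  assumes "finite F" "F \<subseteq> A_I Ob Hom cmp"
  shows "\<exists>k. F \<subseteq> Alev Ob Hom cmp k"
  using assms
proof (induction F rule: finite_induct)
  case empty
  then show ?case by blast
next
  case (insert x F)
  then obtain k l where "F \<subseteq> Alev Ob Hom cmp k" "x \<in> Alev Ob Hom cmp l"
    unfolding A_I_def by blast
  then have "insert x F \<subseteq> Alev Ob Hom cmp (max k l)"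
    using Alev_mono[of k "max k l"] Alev_mono[of l "max k l"] by auto
  then show ?case ..
qed

lemma Bnew_cone:
  assumes "x \<in> Bnew Ob Hom cmp P j"
  shows "node_obj x \<in> Ob" "finite (node_cone x)" "is_section P (fst ` node_cone x)"
    and "anode_less c x \<Longrightarrow> (c, pmor x c) \<in> node_cone x"
    and "\<And>c m. (c, m) \<in> node_cone x \<Longrightarrow> m \<in> Hom (node_obj x) (node_obj c)"
    and "\<And>c m d m'. (c, m) \<in> node_cone x \<Longrightarrow> (d, m') \<in> node_cone x \<Longrightarrow> anode_less d c \<Longrightarrow>
           cmp (pmor c d) m = m'"
proof -
  from assms obtain u S where x: "x = ANode j u S"
    and sec: "is_section P (fst ` fset S)"
    and functional: "\<And>c m m'. (c, m) \<in> fset S \<Longrightarrow> (c, m') \<in> fset S \<Longrightarrow> m = m'"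
    and ob: "u \<in> Ob"
    and hom: "\<forall>(c, m) \<in> fset S. m \<in> Hom u (node_obj c)"
    and comp: "\<forall>(c, m) \<in> fset S. \<forall>(d, m') \<in> fset S. anode_less d c \<longrightarrow> cmp (pmor c d) m = m'"
    unfolding Bnew_def by blast
  have cone: "node_cone x = fset S" and obj: "node_obj x = u"
    using x by (simp_all add: node_cone_def node_obj_def)
  show "node_obj x \<in> Ob" "finite (node_cone x)" "is_section P (fst ` node_cone x)"
    using ob sec by (simp_all add: cone obj)
  show "(c, pmor x c) \<in> node_cone x" if c: "anode_less c x"
  proof -
    obtain m where m: "(c, m) \<in> fset S"
      using c cone unfolding anode_less_def by force
    then have "pmor x c = m"
      unfolding pmor_def cone using functional by blast
    then show ?thesis using m cone by simp
  qed
  show "\<And>c m. (c, m) \<in> node_cone x \<Longrightarrow> m \<in> Hom (node_obj x) (node_obj c)"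
    using hom by (auto simp: cone obj)
  show "\<And>c m d m'. (c, m) \<in> node_cone x \<Longrightarrow> (d, m') \<in> node_cone x \<Longrightarrow> anode_less d c \<Longrightarrow>
           cmp (pmor c d) m = m'"
    using comp by (fastforce simp: cone)
qed

lemma Bnew_intro:
  assumes "finite R" "is_section P R" "u \<in> Ob"
    and "\<forall>c\<in>R. \<mu> c \<in> Hom u (node_obj c)"
    and "\<forall>c\<in>R. \<forall>d\<in>R. anode_less d c \<longrightarrow> cmp (pmor c d) (\<mu> c) = \<mu> d"
  shows "ANode k u ((\<lambda>c. (c, \<mu> c)) |`| Abs_fset R) \<in> Bnew Ob Hom cmp P k"
    and "anode_less c (ANode k u ((\<lambda>c. (c, \<mu> c)) |`| Abs_fset R)) \<longleftrightarrow> c \<in> R"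
proof -
  have graph: "fset ((\<lambda>c. (c, \<mu> c)) |`| Abs_fset R) = (\<lambda>c. (c, \<mu> c)) ` R"
    using assms(1) by (simp add: Abs_fset_inverse)
  moreover have "fst ` fset ((\<lambda>c. (c, \<mu> c)) |`| Abs_fset R) = R"
    unfolding graph by (force simp: image_image)
  ultimately show "ANode k u ((\<lambda>c. (c, \<mu> c)) |`| Abs_fset R) \<in> Bnew Ob Hom cmp P k"
    unfolding Bnew_def using assms by auto
  show "anode_less c (ANode k u ((\<lambda>c. (c, \<mu> c)) |`| Abs_fset R)) \<longleftrightarrow> c \<in> R"
    unfolding anode_less_def node_cone_def using graph by force
qed

lemma Alev_node_obj: "x \<in> Alev Ob Hom cmp k \<Longrightarrow> node_obj x \<in> Ob"
  and Alev_finite_cone: "x \<in> Alev Ob Hom cmp k \<Longrightarrow> finite (node_cone x)"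
  using Alev_imp_Bnew Bnew_cone(1,2) by blast+

lemma Bnew_below: "x \<in> Bnew Ob Hom cmp P j \<Longrightarrow> anode_less c x \<Longrightarrow> c \<in> P"
  using Bnew_cone(3) unfolding is_section_def anode_less_def by blast

lemma Alev_below: "x \<in> Alev Ob Hom cmp k \<Longrightarrow> anode_less c x \<Longrightarrow> c \<in> Alev Ob Hom cmp k"
proof -
  assume "x \<in> Alev Ob Hom cmp k" "anode_less c x"
  then obtain j where "j < k" "c \<in> Alev Ob Hom cmp j"
    using Alev_imp_Bnew Bnew_below by blast
  then show ?thesis using Alev_mono[of j k] by auto
qed

lemma Alev_less_trans:
  assumes "x \<in> Alev Ob Hom cmp k" "anode_less c x" "anode_less d c"
  shows "anode_less d x"
proof -
  obtain j where j: "x \<in> Bnew Ob Hom cmp (Alev Ob Hom cmp j) j"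
    using Alev_imp_Bnew[OF assms(1)] by blast
  have "d \<in> Alev Ob Hom cmp j"
    using Alev_below[OF Bnew_below[OF j assms(2)] assms(3)] .
  then show ?thesis
    using j assms(2,3) Bnew_cone(3) unfolding is_section_def anode_less_def by blast
qed

lemma Alev_pmor_hom:
  "x \<in> Alev Ob Hom cmp k \<Longrightarrow> anode_less c x \<Longrightarrow> pmor x c \<in> Hom (node_obj x) (node_obj c)"
  using Alev_imp_Bnew Bnew_cone(4,5) by blast

lemma Alev_pmor_comp:
  "x \<in> Alev Ob Hom cmp k \<Longrightarrow> anode_less c x \<Longrightarrow> anode_less d c \<Longrightarrow>
     cmp (pmor c d) (pmor x c) = pmor x d"
proof -
  assume x: "x \<in> Alev Ob Hom cmp k" and c: "anode_less c x" and d: "anode_less d c"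
  obtain j where "x \<in> Bnew Ob Hom cmp (Alev Ob Hom cmp j) j"
    using Alev_imp_Bnew[OF x] by blast
  then show ?thesis
    using Bnew_cone(4,6) c d Alev_less_trans[OF x c d] by blast
qed

lemma A_I_is_poset: "is_poset (A_I Ob Hom cmp) anode_le"
  unfolding is_poset_def
proof (intro conjI ballI impI)
  show "anode_le x x" for x by (simp add: anode_le_def)
  show "x = y" if "anode_le x y" "anode_le y x" for x y
    using that anode_less_asym unfolding anode_le_def by blast
  show "anode_le x z" if z: "z \<in> A_I Ob Hom cmp" and xyz: "anode_le x y" "anode_le y z" for x y z
  proof -
    obtain k where "z \<in> Alev Ob Hom cmp k" using z unfolding A_I_def by blast
    then show ?thesis using xyz Alev_less_trans unfolding anode_le_def by blast
  qed
qed

lemma finite_down_closure: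
  assumes "finite F" "F \<subseteq> Alev Ob Hom cmp k"
  shows "finite {c. \<exists>x\<in>F. anode_le c x}"
proof (rule finite_subset)
  show "{c. \<exists>x\<in>F. anode_le c x} \<subseteq> F \<union> (\<Union>x\<in>F. fst ` node_cone x)"
    unfolding anode_le_def anode_less_def by auto
  show "finite (F \<union> (\<Union>x\<in>F. fst ` node_cone x))"
    using assms Alev_finite_cone by blast
qed

lemma A_I_cofinite: "poset_cofinite (A_I Ob Hom cmp) anode_le"
  unfolding poset_cofinite_def
proof
  fix x assume "x \<in> A_I Ob Hom cmp"
  then obtain k where "{x} \<subseteq> Alev Ob Hom cmp k" unfolding A_I_def by blast
  then have "finite {c. \<exists>y\<in>{x}. anode_le c y}" by (rule finite_down_closure[rotated]) simp
  then show "finite {z \<in> A_I Ob Hom cmp. anode_le z x}" by (rule finite_subset[rotated]) blast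
qed

lemma down_closure_is_section:
  assumes "F \<subseteq> Alev Ob Hom cmp k"
  shows "is_section (Alev Ob Hom cmp k) {c. \<exists>x\<in>F. anode_le c x}"
  unfolding is_section_def
proof (intro conjI ballI impI subsetI)
  show "c \<in> Alev Ob Hom cmp k" if "c \<in> {c. \<exists>x\<in>F. anode_le c x}" for c
    using that assms Alev_below unfolding anode_le_def by blast
  show "d \<in> {c. \<exists>x\<in>F. anode_le c x}"
    if "c \<in> {c. \<exists>x\<in>F. anode_le c x}" "anode_less d c" for c d
    using that assms Alev_less_trans unfolding anode_le_def by blast
qed

end

section \<open>Cones in a small category\<close>

text \<open>The image under \<open>p_I\<close> of the morphism \<open>x \<rightarrow> c\<close> of \<open>A_I\<close>, for \<open>c \<le> x\<close>.\<close>

definition pI_arr :: "('o \<Rightarrow> 'm) \<Rightarrow> ('o, 'm) anode \<Rightarrow> ('o, 'm) anode \<Rightarrow> 'm" where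
  "pI_arr ident x c = (if c = x then ident (node_obj x) else pmor x c)"

context
  fixes Ob :: "'o set" and Hom :: "'o \<Rightarrow> 'o \<Rightarrow> 'm set" and cmp :: "'m \<Rightarrow> 'm \<Rightarrow> 'm"
    and ident :: "'o \<Rightarrow> 'm"
  assumes cat: "category Ob Hom cmp ident"
begin

lemma cat_hom_objs: "f \<in> Hom a b \<Longrightarrow> a \<in> Ob \<and> b \<in> Ob"
  using cat unfolding category_def by blast

lemma cat_comp_hom: "f \<in> Hom a b \<Longrightarrow> g \<in> Hom b c \<Longrightarrow> cmp g f \<in> Hom a c"
  using cat cat_hom_objs unfolding category_def by meson

lemma cat_ident_hom: "a \<in> Ob \<Longrightarrow> ident a \<in> Hom a a"
  using cat unfolding category_def by blast

lemma cat_ident_left: "f \<in> Hom a b \<Longrightarrow> cmp (ident b) f = f"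
  and cat_ident_right: "f \<in> Hom a b \<Longrightarrow> cmp f (ident a) = f"
  using cat cat_hom_objs unfolding category_def by meson+

lemma cat_comp_assoc:
  "f \<in> Hom a b \<Longrightarrow> g \<in> Hom b c \<Longrightarrow> h \<in> Hom c d \<Longrightarrow> cmp h (cmp g f) = cmp (cmp h g) f"
  using cat cat_hom_objs unfolding category_def by meson

lemma pI_arr_hom:
  assumes "x \<in> Alev Ob Hom cmp k" "anode_le c x"
  shows "pI_arr ident x c \<in> Hom (node_obj x) (node_obj c)"
  using assms Alev_pmor_hom[OF assms(1)] cat_ident_hom[OF Alev_node_obj[OF assms(1)]]
  unfolding pI_arr_def anode_le_def by auto

lemma pI_arr_comp:
  assumes x: "x \<in> Alev Ob Hom cmp k" and "anode_le c x" "anode_le d c"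
  shows "cmp (pI_arr ident c d) (pI_arr ident x c) = pI_arr ident x d"
proof (cases "c = x")
  case True
  have "pI_arr ident x x = ident (node_obj x)" by (simp add: pI_arr_def)
  with True show ?thesis
    using cat_ident_right[OF pI_arr_hom[OF x assms(3)[unfolded True]]] by simp
next
  case False
  then have c: "anode_less c x" using assms(2) by (simp add: anode_le_def)
  show ?thesis
  proof (cases "d = c")
    case True
    then show ?thesis
      using Alev_pmor_hom[OF x c] cat_ident_left anode_less_irrefl c
      by (auto simp: pI_arr_def)
  next
    case False
    then have d: "anode_less d c" using assms(3) by (simp add: anode_le_def)
    then show ?thesis
      using Alev_pmor_comp[OF x c d] anode_less_irrefl c Alev_less_trans[OF x c d]
      by (auto simp: pI_arr_def)
  qed
qed

lemma Alev_cone_upper_bound: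
  assumes F: "finite F" "F \<subseteq> Alev Ob Hom cmp k" and u: "u \<in> Ob"
    and f: "\<forall>x\<in>F. f x \<in> Hom u (node_obj x)"
    and coherent: "\<forall>x\<in>F. \<forall>y\<in>F. \<forall>c. anode_le c x \<longrightarrow> anode_le c y \<longrightarrow>
                     cmp (pI_arr ident x c) (f x) = cmp (pI_arr ident y c) (f y)"
  shows "\<exists>z\<in>Alev Ob Hom cmp (Suc k). \<forall>x\<in>F. anode_less x z"
proof -
  define R where "R = {c. \<exists>x\<in>F. anode_le c x}"
  define above where "above c = (SOME x. x \<in> F \<and> anode_le c x)" for c
  define \<mu> where "\<mu> c = cmp (pI_arr ident (above c) c) (f (above c))" for c
  have \<mu>_eq: "\<mu> c = cmp (pI_arr ident x c) (f x)" if "x \<in> F" "anode_le c x" for x c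
  proof -
    have "above c \<in> F \<and> anode_le c (above c)"
      unfolding above_def by (rule someI) (use that in blast)
    then show ?thesis unfolding \<mu>_def using coherent that by blast
  qed
  have below_F: "anode_le d x" if "x \<in> F" "anode_le c x" "anode_less d c" for x c d
    using that F Alev_less_trans unfolding anode_le_def by blast
  have R_section: "is_section (Alev Ob Hom cmp k) R"
    unfolding R_def by (rule down_closure_is_section[OF F(2)])
  have hom: "\<forall>c\<in>R. \<mu> c \<in> Hom u (node_obj c)"
  proof
    fix c assume "c \<in> R"
    then obtain x where x: "x \<in> F" "anode_le c x" unfolding R_def by blast
    then have xk: "x \<in> Alev Ob Hom cmp k" using F by blast
    show "\<mu> c \<in> Hom u (node_obj c)"
      unfolding \<mu>_eq[OF x] by (rule cat_comp_hom[OF f[rule_format, OF x(1)] pI_arr_hom[OF xk x(2)]])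
  qed
  have compat: "\<forall>c\<in>R. \<forall>d\<in>R. anode_less d c \<longrightarrow> cmp (pmor c d) (\<mu> c) = \<mu> d"
  proof (intro ballI impI)
    fix c d assume "c \<in> R" "d \<in> R" and dc: "anode_less d c"
    then obtain x where x: "x \<in> F" "anode_le c x" unfolding R_def by blast
    have xk: "x \<in> Alev Ob Hom cmp k" using x F by blast
    have ck: "c \<in> Alev Ob Hom cmp k" using x(2) xk Alev_below[OF xk] unfolding anode_le_def by blast
    have dc': "anode_le d c" using dc unfolding anode_le_def by blast
    have "pmor c d = pI_arr ident c d" using dc anode_less_irrefl by (auto simp: pI_arr_def)
    then have "cmp (pmor c d) (\<mu> c) = cmp (pI_arr ident c d) (cmp (pI_arr ident x c) (f x))"
      using \<mu>_eq[OF x] by simp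
    also have "\<dots> = cmp (cmp (pI_arr ident c d) (pI_arr ident x c)) (f x)"
      by (rule cat_comp_assoc[OF f[rule_format, OF x(1)] pI_arr_hom[OF xk x(2)] pI_arr_hom[OF ck dc']])
    also have "\<dots> = cmp (pI_arr ident x d) (f x)"
      using pI_arr_comp[OF xk x(2) dc'] by simp
    also have "\<dots> = \<mu> d" using \<mu>_eq[OF x(1) below_F[OF x dc]] by simp
    finally show "cmp (pmor c d) (\<mu> c) = \<mu> d" .
  qed
  define z where "z = ANode k u ((\<lambda>c. (c, \<mu> c)) |`| Abs_fset R)"
  have "finite R" unfolding R_def using finite_down_closure F by blast
  note z = Bnew_intro[where \<mu> = \<mu> and Hom = Hom and cmp = cmp and k = k,
      OF this R_section u hom compat, folded z_def]
  then have "z \<in> Alev Ob Hom cmp (Suc k)" by simp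
  moreover have "F \<subseteq> R" unfolding R_def anode_le_def by blast
  ultimately show ?thesis using z(2) by blast
qed

context
  assumes dir: "directed_category Ob Hom cmp"
begin

lemma directed_common_source:
  "finite T \<Longrightarrow> T \<subseteq> Ob \<Longrightarrow> \<exists>u\<in>Ob. \<forall>t\<in>T. Hom u t \<noteq> {}"
proof (induction T rule: finite_induct)
  case empty
  then show ?case using dir unfolding directed_category_def by blast
next
  case (insert t T)
  then obtain u where u: "u \<in> Ob" "\<forall>s\<in>T. Hom u s \<noteq> {}" by blast
  obtain w g h where w: "w \<in> Ob" "g \<in> Hom w u" "h \<in> Hom w t"
    using dir u(1) insert.prems unfolding directed_category_def by blast
  have "Hom w s \<noteq> {}" if "s \<in> T" for s
    using u(2) that cat_comp_hom[OF w(2)] by blast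
  then show ?case using w by blast
qed

lemma directed_equalize_finite:
  assumes "finite C" "u \<in> Ob" "\<forall>c\<in>C. \<alpha> c \<in> Hom u (t c) \<and> \<beta> c \<in> Hom u (t c)"
  shows "\<exists>v h. h \<in> Hom v u \<and> (\<forall>c\<in>C. cmp (\<alpha> c) h = cmp (\<beta> c) h)"
  using assms
proof (induction C rule: finite_induct)
  case empty
  then show ?case using cat_ident_hom by blast
next
  case (insert c C)
  then obtain v h where vh: "h \<in> Hom v u" "\<forall>d\<in>C. cmp (\<alpha> d) h = cmp (\<beta> d) h" by auto
  have \<alpha>\<beta>: "\<alpha> d \<in> Hom u (t d)" "\<beta> d \<in> Hom u (t d)" if "d \<in> insert c C" for d
    using insert.prems that by auto
  have "cmp (\<alpha> c) h \<in> Hom v (t c)" "cmp (\<beta> c) h \<in> Hom v (t c)"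
    using cat_comp_hom[OF vh(1) \<alpha>\<beta>(1)] cat_comp_hom[OF vh(1) \<alpha>\<beta>(2)] by simp_all
  moreover have "v \<in> Ob" "t c \<in> Ob" using cat_hom_objs calculation(1) by blast+
  ultimately obtain w e where we: "e \<in> Hom w v" "cmp (cmp (\<alpha> c) h) e = cmp (cmp (\<beta> c) h) e"
    using dir unfolding directed_category_def by blast
  have "cmp (\<alpha> d) (cmp h e) = cmp (\<beta> d) (cmp h e)" if "d \<in> insert c C" for d
    using that we vh cat_comp_assoc[OF we(1) vh(1) \<alpha>\<beta>(1)[OF that]]
      cat_comp_assoc[OF we(1) vh(1) \<alpha>\<beta>(2)[OF that]] by auto
  then show ?case using cat_comp_hom[OF we(1) vh(1)] by blast
qed

lemma Alev_coherent_cone: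
  assumes F: "finite F" and Fk: "F \<subseteq> Alev Ob Hom cmp k"
  shows "\<exists>v f. v \<in> Ob \<and> (\<forall>x\<in>F. f x \<in> Hom v (node_obj x)) \<and>
           (\<forall>x\<in>F. \<forall>y\<in>F. \<forall>c. anode_le c x \<longrightarrow> anode_le c y \<longrightarrow>
              cmp (pI_arr ident x c) (f x) = cmp (pI_arr ident y c) (f y))"
proof -
  have Alev_k: "x \<in> Alev Ob Hom cmp k" if "x \<in> F" for x using that Fk by blast
  have "node_obj ` F \<subseteq> Ob" using Fk Alev_node_obj[where Hom = Hom and cmp = cmp and k = k] by blast
  then have "\<exists>u\<in>Ob. \<forall>t\<in>node_obj ` F. Hom u t \<noteq> {}"
    by (rule directed_common_source[OF finite_imageI[OF F]])
  then obtain u where u: "u \<in> Ob" "\<forall>x\<in>F. Hom u (node_obj x) \<noteq> {}" by auto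
  define g :: "('o, 'm) anode \<Rightarrow> 'm" where "g x = (SOME m. m \<in> Hom u (node_obj x))" for x
  have g: "g x \<in> Hom u (node_obj x)" if "x \<in> F" for x
    unfolding g_def using u(2) that by (simp add: some_in_eq)
  define leg where "leg x c = cmp (pI_arr ident x c) (g x)" for x c
  have leg_hom: "leg x c \<in> Hom u (node_obj c)" if "x \<in> F" "anode_le c x" for x c
    unfolding leg_def by (rule cat_comp_hom[OF g[OF that(1)] pI_arr_hom[OF Alev_k[OF that(1)] that(2)]])
  define C where "C = {(x, y, c). x \<in> F \<and> y \<in> F \<and> anode_le c x \<and> anode_le c y}"
  have "C \<subseteq> F \<times> F \<times> {c. \<exists>x\<in>F. anode_le c x}" unfolding C_def by blast
  then have "finite C" using finite_down_closure[OF F Fk] F by (simp add: finite_subset)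
  moreover have "\<forall>(x, y, c)\<in>C. leg x c \<in> Hom u (node_obj c) \<and> leg y c \<in> Hom u (node_obj c)"
    unfolding C_def using leg_hom by blast
  ultimately obtain v h where h: "h \<in> Hom v u"
    and eq: "\<forall>(x, y, c)\<in>C. cmp (leg x c) h = cmp (leg y c) h"
    using directed_equalize_finite[of C u "\<lambda>(x, y, c). leg x c" "\<lambda>(x, y, c). node_obj c"
        "\<lambda>(x, y, c). leg y c"] u(1)
    by (auto simp: case_prod_beta)
  define f where "f x = cmp (g x) h" for x
  have f: "\<forall>x\<in>F. f x \<in> Hom v (node_obj x)"
    unfolding f_def using cat_comp_hom[OF h g] by simp
  have f_leg: "cmp (pI_arr ident x c) (f x) = cmp (leg x c) h" if "x \<in> F" "anode_le c x" for x c
    unfolding f_def leg_def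
    by (rule cat_comp_assoc[OF h g[OF that(1)] pI_arr_hom[OF Alev_k[OF that(1)] that(2)]])
  have "\<forall>x\<in>F. \<forall>y\<in>F. \<forall>c. anode_le c x \<longrightarrow> anode_le c y \<longrightarrow>
          cmp (pI_arr ident x c) (f x) = cmp (pI_arr ident y c) (f y)"
  proof (intro ballI allI impI)
    fix x y c assume xy: "x \<in> F" "y \<in> F" and c: "anode_le c x" "anode_le c y"
    then have "(x, y, c) \<in> C" unfolding C_def by blast
    from bspec[OF eq this] have "cmp (leg x c) h = cmp (leg y c) h" by simp
    then show "cmp (pI_arr ident x c) (f x) = cmp (pI_arr ident y c) (f y)"
      using f_leg[OF xy(1) c(1)] f_leg[OF xy(2) c(2)] by simp
  qed
  with f cat_hom_objs[OF h] show ?thesis by blast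
qed

lemma A_I_finite_strict_upper_bound:
  assumes F: "finite F" "F \<subseteq> A_I Ob Hom cmp"
  shows "\<exists>z\<in>A_I Ob Hom cmp. \<forall>x\<in>F. anode_less x z"
proof -
  obtain k where Fk: "F \<subseteq> Alev Ob Hom cmp k" using finite_subset_Alev[OF F] by blast
  then obtain v f where "v \<in> Ob" "\<forall>x\<in>F. f x \<in> Hom v (node_obj x)"
    and "\<forall>x\<in>F. \<forall>y\<in>F. \<forall>c. anode_le c x \<longrightarrow> anode_le c y \<longrightarrow>
           cmp (pI_arr ident x c) (f x) = cmp (pI_arr ident y c) (f y)"
    using Alev_coherent_cone[OF F(1)] by blast
  from Alev_cone_upper_bound[OF F(1) Fk this]
  obtain z where "z \<in> Alev Ob Hom cmp (Suc k)" "\<forall>x\<in>F. anode_less x z" by blast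
  then show ?thesis unfolding A_I_def by blast
qed

lemma A_I_directed: "poset_directed (A_I Ob Hom cmp) anode_le"
proof -
  have "A_I Ob Hom cmp \<noteq> {}" using A_I_finite_strict_upper_bound[of "{}"] by blast
  moreover have "\<exists>z\<in>A_I Ob Hom cmp. anode_le x z \<and> anode_le y z"
    if "x \<in> A_I Ob Hom cmp" "y \<in> A_I Ob Hom cmp" for x y
    using A_I_finite_strict_upper_bound[of "{x, y}"] that unfolding anode_le_def by auto
  ultimately show ?thesis unfolding poset_directed_def by blast
qed

lemma A_I_infinite_height: "infinite_height (A_I Ob Hom cmp) anode_le"
  unfolding infinite_height_def
proof
  fix x assume "x \<in> A_I Ob Hom cmp"
  then obtain z where "z \<in> A_I Ob Hom cmp" "anode_less x z"
    using A_I_finite_strict_upper_bound[of "{x}"] by auto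
  then show "\<exists>z\<in>A_I Ob Hom cmp. anode_le x z \<and> x \<noteq> z"
    using anode_less_irrefl unfolding anode_le_def by blast
qed

end

end

theorem lemma3p9:
  fixes Ob :: "'o set" and Hom :: "'o \<Rightarrow> 'o \<Rightarrow> 'm set"
    and cmp :: "'m \<Rightarrow> 'm \<Rightarrow> 'm" and ident :: "'o \<Rightarrow> 'm"
  assumes "category Ob Hom cmp ident"
    and "directed_category Ob Hom cmp"
  shows "is_poset (A_I Ob Hom cmp) anode_le \<and>
         poset_cofinite (A_I Ob Hom cmp) anode_le \<and>
         poset_directed (A_I Ob Hom cmp) anode_le \<and>
         infinite_height (A_I Ob Hom cmp) anode_le"
  using A_I_is_poset A_I_cofinite A_I_directed[OF assms] A_I_infinite_height[OF assms] by blast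

end
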